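(* Consider a Fragile multi-CPR Game with $n\ge1$ players and $m=1$ CPR satisfying the Assumption below, with constraint policies $\vartheta_i$ as defined below. Then the game admits a unique Generalized Nash equilibrium.
   Context: Let $n,m\ge1$ be integers and $[k]=\{1,\dots,k\}$. Let $C_m=\{(x_1,\dots,x_m)\in[0,1]^m:\sum_{j\in[m]}x_j\le1\}$, $\mathcal{C}_n=\prod_{i\in[n]}C_m$ and $\mathcal{C}_{-i}=\prod_{[n]\setminus\{i\}}C_m$. A strategy profile is $\mathbf{x}=(\mathbf{x}_1,\dots,\mathbf{x}_n)\in\mathcal{C}_n$, $\mathbf{x}_i=(x_{i1},\dots,x_{im})$; write $\mathbf{x}=(\mathbf{x}_i,\mathbf{x}_{-i})$. Put $\mathbf{x}_T^{(j)}=\sum_{i\in[n]}x_{ij}$ and $\mathbf{x}_T^{j|i}=\sum_{\ell\ne i}x_{\ell j}$. Each CPR $j$ has a return rate $\mathcal{R}_j(t)>1$ and failure probability $p_j(t)\in[0,1]$; each player $i$ has parameters $a_i,k_i$. Effective rate: $\mathcal{F}_{ij}(t)=(\mathcal{R}_j(t)-1)^{a_i}(1-p_j(t))-k_i p_j(t)$; utility: $\mathcal{V}_i(\mathbf{x}_i;\mathbf{x}_{-i})=\sum_{j}x_{ij}^{a_i}\mathcal{F}_{ij}(\mathbf{x}_T^{(j)})$. Assumption: (1) $p_j(0)=0$, $p_j(t)=1$ for $t\ge1$; (2) $a_i\in(0,1]$, $k_i>0$; (3) each $\mathcal{F}_{ij}$ (continuous on $[0,1]$) has strictly negative first and second derivatives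 on $(0,1)$. Let $\omega_{ij}\in(0,1)$ be the unique zero of $\mathcal{F}_{ij}$ in $(0,1)$. Active CPRs: $A(\mathbf{x}_{-i})=\{j:\mathbf{x}_T^{j|i}<\omega_{ij}\}$. Constraint policy: $\vartheta_i(\mathbf{x}_{-i})=C_m\cap\big(\prod_{j\in A(\mathbf{x}_{-i})}[0,\omega_{ij}-\mathbf{x}_T^{j|i}]\times\prod_{j\in[m]\setminus A(\mathbf{x}_{-i})}\{0\}\big)$. A Generalized Nash equilibrium (GNE) is $\mathbf{x}^*\in\mathcal{C}_n$ with, for all $i$, $\mathbf{x}^*_i\in\vartheta_i(\mathbf{x}^*_{-i})$ and $\mathcal{V}_i(\mathbf{x}^*_i;\mathbf{x}^*_{-i})\ge\mathcal{V}_i(\mathbf{y};\mathbf{x}^*_{-i})$ for all $\mathbf{y}\in\vartheta_i(\mathbf{x}^*_{-i})$. *)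

theory Defs
  imports "HOL-Analysis.Analysis"
begin

text \<open>Players are indexed by {..<n}, CPRs by {..<m}.
  A strategy of a player is a function nat => real (only indices < m matter);
  a strategy profile is a function nat => nat => real (x i j = x_{ij}).
  R j, p j : return rate and failure probability of CPR j; a i, k i : player parameters.\<close>

definition eff_rate :: "(nat \<Rightarrow> real \<Rightarrow> real) \<Rightarrow> (nat \<Rightarrow> real \<Rightarrow> real) \<Rightarrow>
    (nat \<Rightarrow> real) \<Rightarrow> (nat \<Rightarrow> real) \<Rightarrow> nat \<Rightarrow> nat \<Rightarrow> real \<Rightarrow> real" where
  "eff_rate R p a k i j t = (R j t - 1) powr (a i) * (1 - p j t) - k i * p j t"

definition fragile_assumption :: "nat \<Rightarrow> nat \<Rightarrow> (nat \<Rightarrow> real \<Rightarrow> real) \<Rightarrow>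
    (nat \<Rightarrow> real \<Rightarrow> real) \<Rightarrow> (nat \<Rightarrow> real) \<Rightarrow> (nat \<Rightarrow> real) \<Rightarrow> bool" where
  "fragile_assumption n m R p a k \<longleftrightarrow>
     (\<forall>j<m. (\<forall>t\<ge>0. R j t > 1 \<and> 0 \<le> p j t \<and> p j t \<le> 1)
            \<and> p j 0 = 0 \<and> (\<forall>t\<ge>1. p j t = 1)) \<and>
     (\<forall>i<n. 0 < a i \<and> a i \<le> 1 \<and> k i > 0) \<and>
     (\<forall>i<n. \<forall>j<m.
        continuous_on {0..1} (eff_rate R p a k i j) \<and>
        (\<exists>F' F''. \<forall>t\<in>{0<..<1}.
            (eff_rate R p a k i j has_real_derivative F' t) (at t) \<and>
            (F' has_real_derivative F'' t) (at t) \<and> F' t < 0 \<and> F'' t < 0))"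

definition omega :: "(nat \<Rightarrow> real \<Rightarrow> real) \<Rightarrow> (nat \<Rightarrow> real \<Rightarrow> real) \<Rightarrow>
    (nat \<Rightarrow> real) \<Rightarrow> (nat \<Rightarrow> real) \<Rightarrow> nat \<Rightarrow> nat \<Rightarrow> real" where
  "omega R p a k i j = (THE w. 0 < w \<and> w < 1 \<and> eff_rate R p a k i j w = 0)"

definition simplex_C :: "nat \<Rightarrow> (nat \<Rightarrow> real) set" where
  "simplex_C m = {y. (\<forall>j<m. 0 \<le> y j \<and> y j \<le> 1) \<and> (\<Sum>j<m. y j) \<le> 1}"

definition others_total :: "nat \<Rightarrow> (nat \<Rightarrow> nat \<Rightarrow> real) \<Rightarrow> nat \<Rightarrow> nat \<Rightarrow> real" where
  "others_total n x i j = (\<Sum>l\<in>{..<n} - {i}. x l j)"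

definition active_cprs :: "nat \<Rightarrow> nat \<Rightarrow> (nat \<Rightarrow> real \<Rightarrow> real) \<Rightarrow> (nat \<Rightarrow> real \<Rightarrow> real) \<Rightarrow>
    (nat \<Rightarrow> real) \<Rightarrow> (nat \<Rightarrow> real) \<Rightarrow> (nat \<Rightarrow> nat \<Rightarrow> real) \<Rightarrow> nat \<Rightarrow> nat set" where
  "active_cprs n m R p a k x i = {j. j < m \<and> others_total n x i j < omega R p a k i j}"

definition constraint_policy :: "nat \<Rightarrow> nat \<Rightarrow> (nat \<Rightarrow> real \<Rightarrow> real) \<Rightarrow> (nat \<Rightarrow> real \<Rightarrow> real) \<Rightarrow>
    (nat \<Rightarrow> real) \<Rightarrow> (nat \<Rightarrow> real) \<Rightarrow> (nat \<Rightarrow> nat \<Rightarrow> real) \<Rightarrow> nat \<Rightarrow> (nat \<Rightarrow> real) set" where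
  "constraint_policy n m R p a k x i = simplex_C m \<inter>
     {y. \<forall>j<m. (j \<in> active_cprs n m R p a k x i \<longrightarrow>
                    0 \<le> y j \<and> y j \<le> omega R p a k i j - others_total n x i j) \<and>
               (j \<notin> active_cprs n m R p a k x i \<longrightarrow> y j = 0)}"

definition utility :: "nat \<Rightarrow> nat \<Rightarrow> (nat \<Rightarrow> real \<Rightarrow> real) \<Rightarrow> (nat \<Rightarrow> real \<Rightarrow> real) \<Rightarrow>
    (nat \<Rightarrow> real) \<Rightarrow> (nat \<Rightarrow> real) \<Rightarrow> nat \<Rightarrow> (nat \<Rightarrow> real) \<Rightarrow> (nat \<Rightarrow> nat \<Rightarrow> real) \<Rightarrow> real" where
  "utility n m R p a k i y x =
     (\<Sum>j<m. (y j) powr (a i) * eff_rate R p a k i j (y j + others_total n x i j))"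

definition is_GNE :: "nat \<Rightarrow> nat \<Rightarrow> (nat \<Rightarrow> real \<Rightarrow> real) \<Rightarrow> (nat \<Rightarrow> real \<Rightarrow> real) \<Rightarrow>
    (nat \<Rightarrow> real) \<Rightarrow> (nat \<Rightarrow> real) \<Rightarrow> (nat \<Rightarrow> nat \<Rightarrow> real) \<Rightarrow> bool" where
  "is_GNE n m R p a k x \<longleftrightarrow>
     (\<forall>i<n. x i \<in> simplex_C m) \<and>
     (\<forall>i<n. x i \<in> constraint_policy n m R p a k x i \<and>
        (\<forall>y\<in>constraint_policy n m R p a k x i.
            utility n m R p a k i (x i) x \<ge> utility n m R p a k i y x))"

end

(* Write F_i for the effective rate of player i and w_i for its zero. When the others invest
   s in total, player i maximises z^a_i F_i(z + s) over [0, w_i - s]. Since F_i is decreasing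
   and concave, the marginal a_i F_i(z + s) + z F_i'(z + s) is strictly decreasing in z, so the
   best response is the unique root of the first-order condition, and it depends only on the
   total t = z + s: it is phi_i(t) = -a_i F_i(t) / F_i'(t) for t < w_i and 0 otherwise.
   Hence the equilibria are exactly the profiles x_i = phi_i(T) where T > 0 is a fixed point of
   the sum of the phi_i. Each phi_i is continuous, nonincreasing and vanishes beyond w_i, so
   this sum minus the identity changes sign and is strictly decreasing: the fixed point exists
   and is unique. *)

theory Submission
  imports Defs
begin

lemma antimono_sum_fixpoint_unique:
  fixes \<phi> :: "'i \<Rightarrow> 'a::{linorder, ordered_comm_monoid_add} \<Rightarrow> 'a"
  assumes antimono: "\<And>i. i \<in> I \<Longrightarrow> antimono_on A (\<phi> i)"
    and "S \<in> A" "T \<in> A" "(\<Sum>i\<in>I. \<phi> i S) = S" "(\<Sum>i\<in>I. \<phi> i T) = T"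
  shows "S = T"
proof -
  have "S \<le> T" if "S \<in> A" "T \<in> A" "(\<Sum>i\<in>I. \<phi> i S) = S" "(\<Sum>i\<in>I. \<phi> i T) = T" for S T
  proof (rule ccontr)
    assume "\<not> S \<le> T"
    then have "\<phi> i S \<le> \<phi> i T" if "i \<in> I" for i
      using monotone_onD[OF antimono[OF that], of T S] \<open>S \<in> A\<close> \<open>T \<in> A\<close> by simp
    then have "(\<Sum>i\<in>I. \<phi> i S) \<le> (\<Sum>i\<in>I. \<phi> i T)"
      by (rule sum_mono)
    then show False using that \<open>\<not> S \<le> T\<close> by simp
  qed
  then show ?thesis using assms by (meson order.antisym)
qed

lemma antimono_sum_fixpoint_exists:
  fixes \<phi> :: "'i \<Rightarrow> real \<Rightarrow> real"
  assumes "finite I"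
    and nonneg: "\<And>i t. i \<in> I \<Longrightarrow> 0 \<le> \<phi> i t"
    and antimono: "\<And>i. i \<in> I \<Longrightarrow> antimono_on {0<..} (\<phi> i)"
    and continuous: "\<And>i. i \<in> I \<Longrightarrow> continuous_on {0<..} (\<phi> i)"
    and vanishing: "\<And>i. i \<in> I \<Longrightarrow> \<exists>b>0. \<phi> i b = 0"
    and positive: "i0 \<in> I" "0 < t0" "0 < \<phi> i0 t0"
  shows "\<exists>T>0. (\<Sum>i\<in>I. \<phi> i T) = T"
proof -
  obtain b where b: "\<And>i. i \<in> I \<Longrightarrow> 0 < b i \<and> \<phi> i (b i) = 0"
    using vanishing by metis
  define B where "B = Max (b ` I)"
  have b_le_B: "b i \<le> B" if "i \<in> I" for i
    unfolding B_def using \<open>finite I\<close> that by simp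
  have "0 < B" using b_le_B b positive(1) by (meson less_le_trans)
  have vanishing_B: "\<phi> i B = 0" if "i \<in> I" for i
    using monotone_onD[OF antimono[OF that], of "b i" B] b[OF that] b_le_B[OF that] nonneg[OF that]
    by (simp add: antisym)
  define e where "e = min t0 (\<phi> i0 t0)"
  have "0 < e" using positive by (simp add: e_def)
  have "e \<le> \<phi> i0 t0" by (simp add: e_def)
  also have "\<dots> \<le> \<phi> i0 e"
    using monotone_onD[OF antimono[OF positive(1)], of e t0] \<open>0 < e\<close> positive by (simp add: e_def)
  also have "\<dots> \<le> (\<Sum>i\<in>I. \<phi> i e)"
    using \<open>finite I\<close> positive(1) nonneg by (intro member_le_sum) auto
  finally have e_below: "e \<le> (\<Sum>i\<in>I. \<phi> i e)" .
  have "e \<le> B"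
  proof (rule ccontr)
    assume "\<not> e \<le> B"
    then have "\<phi> i0 t0 \<le> \<phi> i0 B"
      using monotone_onD[OF antimono[OF positive(1)], of B t0] \<open>0 < B\<close> by (simp add: e_def)
    then show False using vanishing_B[OF positive(1)] positive by simp
  qed
  have "continuous_on {e..B} (\<phi> i)" if "i \<in> I" for i
    using \<open>0 < e\<close> by (intro continuous_on_subset[OF continuous[OF that]]) auto
  then have "continuous_on {e..B} (\<lambda>t. (\<Sum>i\<in>I. \<phi> i t) - t)"
    by (intro continuous_intros) auto
  then obtain T where "e \<le> T" "(\<Sum>i\<in>I. \<phi> i T) - T = 0"
    using IVT2'[of "\<lambda>t. (\<Sum>i\<in>I. \<phi> i t) - t" B 0 e] e_below \<open>e \<le> B\<close> \<open>0 < B\<close> vanishing_B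
    by auto
  then show ?thesis using \<open>0 < e\<close> by (intro exI[of _ T]) auto
qed

(* One player i facing one CPR: F is the effective rate F_i and a the exponent a_i; payoff s z
   is the utility V_i of investing z while the others invest s in total. *)
locale fragile_player =
  fixes F F' F'' :: "real \<Rightarrow> real" and a :: real
  assumes continuous_on_F: "continuous_on {0..1} F"
    and has_derivative_F: "\<And>t. 0 < t \<Longrightarrow> t < 1 \<Longrightarrow> (F has_real_derivative F' t) (at t)"
    and has_derivative_F': "\<And>t. 0 < t \<Longrightarrow> t < 1 \<Longrightarrow> (F' has_real_derivative F'' t) (at t)"
    and F'_neg: "\<And>t. 0 < t \<Longrightarrow> t < 1 \<Longrightarrow> F' t < 0"
    and F''_neg: "\<And>t. 0 < t \<Longrightarrow> t < 1 \<Longrightarrow> F'' t < 0"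
    and F_0_pos: "0 < F 0"
    and F_1_neg: "F 1 < 0"
    and exponent_pos: "0 < a"
begin

lemma F_strict_decreasing:
  assumes "0 \<le> x" "x < y" "y \<le> 1"
  shows "F y < F x"
proof (rule DERIV_neg_imp_decreasing_open[OF \<open>x < y\<close>])
  show "\<exists>d. (F has_real_derivative d) (at t) \<and> d < 0" if "x < t" "t < y" for t
  proof -
    have "0 < t" "t < 1" using that assms by linarith+
    then show ?thesis using has_derivative_F F'_neg by blast
  qed
  show "continuous_on {x..y} F"
    using assms by (intro continuous_on_subset[OF continuous_on_F]) auto
qed

lemma F'_strict_decreasing:
  assumes "0 < x" "x < y" "y < 1"
  shows "F' y < F' x"
proof (rule DERIV_neg_imp_decreasing[OF \<open>x < y\<close>])
  show "\<exists>d. (F' has_real_derivative d) (at t) \<and> d < 0" if "x \<le> t" "t \<le> y" for t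
  proof -
    have "0 < t" "t < 1" using that assms by linarith+
    then show ?thesis using has_derivative_F' F''_neg by blast
  qed
qed

lemma continuous_on_F': "continuous_on {0<..<1} F'"
  by (intro continuous_at_imp_continuous_on ballI) (auto intro: DERIV_isCont has_derivative_F')

lemma ex1_root: "\<exists>!w. 0 < w \<and> w < 1 \<and> F w = 0"
proof -
  obtain w where w: "0 \<le> w" "w \<le> 1" "F w = 0"
    using IVT2'[of F 1 0 0] F_0_pos F_1_neg continuous_on_F by auto
  then have "0 < w \<and> w < 1 \<and> F w = 0"
    using F_0_pos F_1_neg by (auto simp: order.order_iff_strict)
  moreover have "v = w" if "0 < v \<and> v < 1 \<and> F v = 0" for v
    using F_strict_decreasing[of v w] F_strict_decreasing[of w v] that w
    by (cases v w rule: linorder_cases) auto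
  ultimately show ?thesis by blast
qed

definition root :: real where
  "root = (THE w. 0 < w \<and> w < 1 \<and> F w = 0)"

lemma root_pos: "0 < root" and root_less_1: "root < 1" and F_root: "F root = 0"
  using theI'[OF ex1_root] unfolding root_def by auto

lemma F_pos_below_root: "0 \<le> t \<Longrightarrow> t < root \<Longrightarrow> 0 < F t"
  using F_strict_decreasing[of t root] root_less_1 F_root by auto

definition payoff :: "real \<Rightarrow> real \<Rightarrow> real" where
  "payoff s z = z powr a * F (z + s)"

definition marginal :: "real \<Rightarrow> real \<Rightarrow> real" where
  "marginal s z = a * F (z + s) + z * F' (z + s)"

lemma continuous_on_payoff:
  assumes "0 \<le> s"
  shows "continuous_on {0..1 - s} (payoff s)"
proof -
  have "continuous_on {0..1 - s} (\<lambda>z. z powr a)"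
    using exponent_pos by (intro continuous_on_powr' continuous_intros) auto
  moreover have "continuous_on {0..1 - s} (\<lambda>z. F (z + s))"
    using assms by (intro continuous_on_compose2[OF continuous_on_F] continuous_intros) auto
  ultimately show ?thesis
    unfolding payoff_def by (rule continuous_on_mult)
qed

lemma payoff_has_derivative:
  assumes "0 < z" "0 \<le> s" "z + s < 1"
  shows "(payoff s has_real_derivative z powr a / z * marginal s z) (at z)"
proof -
  have "0 < z + s" using assms by linarith
  then have "((\<lambda>z. F (z + s)) has_real_derivative F' (z + s)) (at z)"
    using has_derivative_F[OF _ assms(3)] by (simp add: DERIV_shift)
  then have "(payoff s has_real_derivative
      a * z powr (a - 1) * F (z + s) + F' (z + s) * z powr a) (at z)"
    unfolding payoff_def using assms(1) by (intro DERIV_mult has_real_derivative_powr) auto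
  moreover have "z powr (a - 1) = z powr a / z"
    using assms by (simp add: powr_diff)
  ultimately show ?thesis
    using assms(1) by (simp add: marginal_def field_simps)
qed

lemma marginal_strict_decreasing:
  assumes "0 \<le> s" "0 < z1" "z1 < z2" "z2 + s < 1"
  shows "marginal s z2 < marginal s z1"
proof (rule DERIV_neg_imp_decreasing[OF \<open>z1 < z2\<close>])
  fix t assume "z1 \<le> t" "t \<le> z2"
  then have t: "0 < t" "0 < t + s" "t + s < 1" using assms by linarith+
  have "((\<lambda>z. F (z + s)) has_real_derivative F' (t + s)) (at t)"
    using has_derivative_F[OF t(2,3)] by (simp add: DERIV_shift)
  moreover have "((\<lambda>z. F' (z + s)) has_real_derivative F'' (t + s)) (at t)"
    using has_derivative_F'[OF t(2,3)] by (simp add: DERIV_shift)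
  ultimately have "(marginal s has_real_derivative
      a * F' (t + s) + (1 * F' (t + s) + F'' (t + s) * t)) (at t)"
    unfolding marginal_def by (intro DERIV_add DERIV_cmult DERIV_mult DERIV_ident)
  moreover have "a * F' (t + s) + (F' (t + s) + t * F'' (t + s)) < 0"
    using F'_neg[OF t(2,3)] F''_neg[OF t(2,3)] t(1) exponent_pos
    by (simp add: add_neg_neg mult_pos_neg)
  ultimately show "\<exists>d. (marginal s has_real_derivative d) (at t) \<and> d < 0"
    by (metis mult.commute mult_1)
qed

lemma payoff_le_at_marginal_zero:
  assumes "0 \<le> s" "0 < v" "v + s < 1" "marginal s v = 0" "0 \<le> z" "z + s \<le> 1"
  shows "payoff s z \<le> payoff s v"
proof (cases z v rule: linorder_cases)
  case less
  have "payoff s z < payoff s v"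
  proof (rule DERIV_pos_imp_increasing_open[OF less])
    fix t assume "z < t" "t < v"
    then have t: "0 < t" "t + s < 1" using assms by linarith+
    have "0 < marginal s t"
      using marginal_strict_decreasing[of s t v] \<open>t < v\<close> t assms by simp
    then have "0 < t powr a / t * marginal s t" using t by simp
    then show "\<exists>d. (payoff s has_real_derivative d) (at t) \<and> 0 < d"
      using payoff_has_derivative[OF t(1) assms(1) t(2)] by blast
  next
    show "continuous_on {z..v} (payoff s)"
      using assms by (intro continuous_on_subset[OF continuous_on_payoff]) auto
  qed
  then show ?thesis by simp
next
  case greater
  have "payoff s z < payoff s v"
  proof (rule DERIV_neg_imp_decreasing_open[OF greater])
    fix t assume "v < t" "t < z"
    then have t: "0 < t" "t + s < 1" using assms by linarith+
    have "marginal s t < 0"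
      using marginal_strict_decreasing[of s v t] \<open>v < t\<close> t assms by simp
    then have "t powr a / t * marginal s t < 0" using t by (simp add: mult_pos_neg del: times_divide_eq_left)
    then show "\<exists>d. (payoff s has_real_derivative d) (at t) \<and> d < 0"
      using payoff_has_derivative[OF t(1) assms(1) t(2)] by blast
  next
    show "continuous_on {v..z} (payoff s)"
      using assms by (intro continuous_on_subset[OF continuous_on_payoff]) auto
  qed
  then show ?thesis by simp
qed simp

lemma marginal_zero_at_interior_max:
  assumes "0 \<le> s" "0 < v" "v < b" "v + s < 1"
    and maximal: "\<And>z. 0 \<le> z \<Longrightarrow> z \<le> b \<Longrightarrow> payoff s z \<le> payoff s v"
  shows "marginal s v = 0"
proof -
  have "v powr a / v * marginal s v = 0"
  proof (rule DERIV_local_max[OF payoff_has_derivative[OF assms(2,1,4)]])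
    show "0 < min v (b - v)" using assms by simp
    show "\<forall>y. \<bar>v - y\<bar> < min v (b - v) \<longrightarrow> payoff s y \<le> payoff s v"
      using maximal by (auto simp: abs_if split: if_splits)
  qed
  then show ?thesis using assms(2) by simp
qed

definition feasible :: "real \<Rightarrow> real set" where
  "feasible s = (if s < root then {0..root - s} else {0})"

definition best_response :: "real \<Rightarrow> real \<Rightarrow> bool" where
  "best_response s v \<longleftrightarrow> v \<in> feasible s \<and> (\<forall>z\<in>feasible s. payoff s z \<le> payoff s v)"

(* The investment v of a player whose best response brings the total investment to t:
   the first-order condition a F t + v F' t = 0 solved for v. *)
definition response :: "real \<Rightarrow> real" where
  "response t = (if 0 < t \<and> t < root then - a * F t / F' t else 0)"

lemma marginal_eq_0_iff:
  assumes "0 < v + s" "v + s < 1"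
  shows "marginal s v = 0 \<longleftrightarrow> v = - a * F (v + s) / F' (v + s)"
  using F'_neg[OF assms] by (auto simp: marginal_def field_simps)

lemma response_pos: "0 < t \<Longrightarrow> t < root \<Longrightarrow> 0 < response t"
  using F_pos_below_root[of t] F'_neg[of t] root_less_1 exponent_pos
  by (simp add: response_def divide_pos_neg)

lemma response_nonneg: "0 \<le> response t"
  using response_pos[of t] by (auto simp: response_def)

lemma response_eq_0: "root \<le> t \<Longrightarrow> response t = 0"
  by (simp add: response_def)

lemma antimono_response: "antimono_on {0<..} response"
proof (rule monotone_onI)
  fix x y :: real assume "x \<in> {0<..}" "x \<le> y"
  show "response y \<le> response x"
  proof (cases "y < root")
    case True
    then have xy: "0 < x" "y < 1" using \<open>x \<in> {0<..}\<close> root_less_1 by auto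
    have "a * F y \<le> a * F x"
      using F_strict_decreasing[of x y] \<open>x \<le> y\<close> xy exponent_pos by (cases "x = y") auto
    moreover have "- F' x \<le> - F' y"
      using F'_strict_decreasing[of x y] \<open>x \<le> y\<close> xy by (cases "x = y") auto
    ultimately have "a * F y / - F' y \<le> a * F x / - F' x"
      using F_pos_below_root[of x] F'_neg[of x] xy True \<open>x \<le> y\<close> exponent_pos by (intro frac_le) auto
    then show ?thesis using True xy \<open>x \<le> y\<close> by (simp add: response_def)
  qed (simp add: response_eq_0 response_nonneg)
qed

lemma continuous_on_response: "continuous_on {0<..} response"
proof -
  have response_min: "response t = max 0 (- a * F (min t root) / F' (min t root))" if "0 < t" for t
    using that response_pos[of t] F_root by (auto simp: response_def min_def)
  have min_root: "min t root \<in> {0<..<1}" if "0 < t" for t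
    using that root_pos root_less_1 by auto
  have "continuous_on {0<..} (\<lambda>t. min t root)"
    by (intro continuous_intros)
  moreover have "(\<lambda>t. min t root) ` {0<..} \<subseteq> {0<..<1}"
    by (intro image_subsetI min_root) simp
  moreover have "continuous_on {0<..<1} F"
    by (rule continuous_on_subset[OF continuous_on_F]) auto
  ultimately have "continuous_on {0<..} (\<lambda>t. F (min t root))"
    and "continuous_on {0<..} (\<lambda>t. F' (min t root))"
    using continuous_on_compose2 continuous_on_F' by blast+
  moreover have "F' (min t root) \<noteq> 0" if "0 < t" for t
    using F'_neg min_root[OF that] by (metis greaterThanLessThan_iff less_irrefl)
  ultimately have "continuous_on {0<..} (\<lambda>t. max 0 (- a * F (min t root) / F' (min t root)))"
    by (intro continuous_intros) auto
  then show ?thesis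
    by (rule continuous_on_eq) (simp add: response_min)
qed

lemma best_response_iff:
  assumes "0 \<le> s"
  shows "best_response s v \<longleftrightarrow> 0 < v + s \<and> v = response (v + s)"
proof (cases "s < root")
  case False
  then have "best_response s v \<longleftrightarrow> v = 0"
    by (auto simp: best_response_def feasible_def)
  also have "\<dots> \<longleftrightarrow> 0 < v + s \<and> v = response (v + s)"
    using False root_pos response_nonneg[of "v + s"] response_eq_0[of "v + s"] response_eq_0[of s]
    by auto
  finally show ?thesis .
next
  case True
  have feasible: "feasible s = {0..root - s}" using True by (simp add: feasible_def)
  show ?thesis
  proof
    assume "best_response s v"
    then have v: "0 \<le> v" "v \<le> root - s"
      and maximal: "\<And>z. 0 \<le> z \<Longrightarrow> z \<le> root - s \<Longrightarrow> payoff s z \<le> payoff s v"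
      by (auto simp: best_response_def feasible)
    \<comment> \<open>The payoff vanishes at both ends of the feasible interval but not in between,
      so the maximiser is interior.\<close>
    define z where "z = (root - s) / 2"
    have "0 < z" "z + s < root" using True by (auto simp: z_def field_simps)
    then have "0 < payoff s z"
      using F_pos_below_root[of "z + s"] assms by (simp add: payoff_def)
    also have "\<dots> \<le> payoff s v" using maximal True by (simp add: z_def)
    finally have "0 < v" "v < root - s"
      using v F_root exponent_pos by (auto simp: payoff_def order.order_iff_strict)
    then have "marginal s v = 0"
      using root_less_1 assms maximal by (intro marginal_zero_at_interior_max) auto
    then show "0 < v + s \<and> v = response (v + s)"
      using \<open>0 < v\<close> \<open>v < root - s\<close> root_less_1 assms by (simp add: marginal_eq_0_iff response_def)
  next
    assume fixpoint: "0 < v + s \<and> v = response (v + s)"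
    then have "v + s < root"
      using True response_eq_0[of "v + s"] by force
    then have "0 < v"
      using fixpoint response_pos[of "v + s"] by simp
    have "marginal s v = 0"
      using fixpoint \<open>v + s < root\<close> root_less_1 by (auto simp: marginal_eq_0_iff response_def)
    then show "best_response s v"
      using \<open>0 < v\<close> \<open>v + s < root\<close> root_less_1 assms
      by (auto simp: best_response_def feasible intro!: payoff_le_at_marginal_zero)
  qed
qed

lemma best_response_le_1: "0 \<le> s \<Longrightarrow> best_response s v \<Longrightarrow> v \<le> 1"
  using root_less_1 by (auto simp: best_response_def feasible_def split: if_splits)

end

lemma fragile_assumption_imp_fragile_player:
  assumes "fragile_assumption n m R p a k" "i < n" "j < m"
  shows "\<exists>F' F''. fragile_player (eff_rate R p a k i j) F' F'' (a i)"
proof -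
  have "1 < R j 0" "p j 0 = 0" "p j 1 = 1" "0 < a i" "0 < k i"
    using assms unfolding fragile_assumption_def by auto
  then have "0 < eff_rate R p a k i j 0" "eff_rate R p a k i j 1 < 0"
    by (simp_all add: eff_rate_def)
  moreover obtain F' F'' where "\<forall>t\<in>{0<..<1}.
      (eff_rate R p a k i j has_real_derivative F' t) (at t) \<and>
      (F' has_real_derivative F'' t) (at t) \<and> F' t < 0 \<and> F'' t < 0"
    using assms unfolding fragile_assumption_def by blast
  moreover have "continuous_on {0..1} (eff_rate R p a k i j)"
    using assms unfolding fragile_assumption_def by blast
  ultimately have "fragile_player (eff_rate R p a k i j) F' F'' (a i)"
    by unfold_locales (use \<open>0 < a i\<close> in auto)
  then show ?thesis by blast
qed

lemma others_total_eq: "i < n \<Longrightarrow> others_total n x i j = (\<Sum>l<n. x l j) - x i j"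
  unfolding others_total_def by (simp add: sum_diff1)

lemma others_total_nonneg: "(\<And>l. l < n \<Longrightarrow> 0 \<le> x l j) \<Longrightarrow> 0 \<le> others_total n x i j"
  unfolding others_total_def by (intro sum_nonneg) auto

context
  fixes n :: nat and R p :: "nat \<Rightarrow> real \<Rightarrow> real" and a k :: "nat \<Rightarrow> real"
    and F' F'' :: "nat \<Rightarrow> real \<Rightarrow> real"
  assumes players: "\<And>i. i < n \<Longrightarrow> fragile_player (eff_rate R p a k i 0) (F' i) (F'' i) (a i)"
begin

lemma constraint_policy_single_cpr_iff:
  assumes "i < n" "0 \<le> others_total n x i 0"
  shows "y \<in> constraint_policy n 1 R p a k x i \<longleftrightarrow>
    y 0 \<in> fragile_player.feasible (eff_rate R p a k i 0) (others_total n x i 0)"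
proof -
  interpret fragile_player "eff_rate R p a k i 0" "F' i" "F'' i" "a i"
    using players[OF assms(1)] .
  have "omega R p a k i 0 = root" by (simp add: omega_def root_def)
  then show ?thesis
    using root_less_1 assms(2)
    by (auto simp: constraint_policy_def simplex_C_def active_cprs_def feasible_def lessThan_Suc)
qed

lemma utility_single_cpr:
  "i < n \<Longrightarrow> utility n 1 R p a k i y x =
    fragile_player.payoff (eff_rate R p a k i 0) (a i) (others_total n x i 0) (y 0)"
  by (simp add: utility_def fragile_player.payoff_def[OF players])

lemma optimal_strategy_single_cpr_iff:
  assumes "i < n" "0 \<le> others_total n x i 0"
  shows "x i \<in> constraint_policy n 1 R p a k x i \<and>
      (\<forall>y\<in>constraint_policy n 1 R p a k x i. utility n 1 R p a k i y x \<le> utility n 1 R p a k i (x i) x)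
    \<longleftrightarrow> fragile_player.best_response (eff_rate R p a k i 0) (a i) (others_total n x i 0) (x i 0)"
    (is "?optimal \<longleftrightarrow> _")
proof -
  interpret fragile_player "eff_rate R p a k i 0" "F' i" "F'' i" "a i"
    using players[OF assms(1)] .
  have policy: "y \<in> constraint_policy n 1 R p a k x i \<longleftrightarrow> y 0 \<in> feasible (others_total n x i 0)" for y
    using constraint_policy_single_cpr_iff[OF assms] .
  show ?thesis
  proof
    assume opt: ?optimal
    show "best_response (others_total n x i 0) (x i 0)"
      unfolding best_response_def
    proof (intro conjI ballI)
      show "x i 0 \<in> feasible (others_total n x i 0)" using opt policy by blast
      fix z assume "z \<in> feasible (others_total n x i 0)"
      then have "utility n 1 R p a k i (\<lambda>_. z) x \<le> utility n 1 R p a k i (x i) x"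
        using opt policy[of "\<lambda>_. z"] by blast
      then show "payoff (others_total n x i 0) z \<le> payoff (others_total n x i 0) (x i 0)"
        unfolding utility_single_cpr[OF assms(1)] .
    qed
  next
    assume "best_response (others_total n x i 0) (x i 0)"
    then show ?optimal
      unfolding best_response_def utility_single_cpr[OF assms(1)] using policy by blast
  qed
qed

lemma is_GNE_single_cpr_iff_best_responses:
  "is_GNE n 1 R p a k x \<longleftrightarrow> (\<forall>i<n. 0 \<le> x i 0 \<and>
    fragile_player.best_response (eff_rate R p a k i 0) (a i) (others_total n x i 0) (x i 0))"
proof
  assume gne: "is_GNE n 1 R p a k x"
  then have "\<And>l. l < n \<Longrightarrow> 0 \<le> x l 0"
    by (simp add: is_GNE_def simplex_C_def)
  with gne show "\<forall>i<n. 0 \<le> x i 0 \<and>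
      fragile_player.best_response (eff_rate R p a k i 0) (a i) (others_total n x i 0) (x i 0)"
    using optimal_strategy_single_cpr_iff[OF _ others_total_nonneg] unfolding is_GNE_def by blast
next
  assume best: "\<forall>i<n. 0 \<le> x i 0 \<and>
    fragile_player.best_response (eff_rate R p a k i 0) (a i) (others_total n x i 0) (x i 0)"
  then have others_nonneg: "0 \<le> others_total n x i 0" for i
    by (intro others_total_nonneg) blast
  have "x i \<in> simplex_C 1" if "i < n" for i
    using best that fragile_player.best_response_le_1[OF players[OF that] others_nonneg[of i]]
    by (simp add: simplex_C_def)
  with best show "is_GNE n 1 R p a k x"
    using optimal_strategy_single_cpr_iff others_nonneg unfolding is_GNE_def by blast
qed

lemma is_GNE_single_cpr_iff_fixpoint:
  assumes "0 < n"
  shows "is_GNE n 1 R p a k x \<longleftrightarrow> 0 < (\<Sum>l<n. x l 0) \<and>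
    (\<forall>i<n. x i 0 = fragile_player.response (eff_rate R p a k i 0) (F' i) (a i) (\<Sum>l<n. x l 0))"
    (is "_ \<longleftrightarrow> 0 < ?T \<and> (\<forall>i<n. x i 0 = ?response i ?T)")
proof -
  have total: "x i 0 + others_total n x i 0 = ?T" if "i < n" for i
    using others_total_eq[OF that] by simp
  have best_response_iff_total: "fragile_player.best_response (eff_rate R p a k i 0) (a i)
      (others_total n x i 0) (x i 0) \<longleftrightarrow> 0 < ?T \<and> x i 0 = ?response i ?T"
    if "i < n" "\<And>l. l < n \<Longrightarrow> 0 \<le> x l 0" for i
    using fragile_player.best_response_iff[OF players others_total_nonneg] total that by simp
  show ?thesis
  proof
    assume "is_GNE n 1 R p a k x"
    then show "0 < ?T \<and> (\<forall>i<n. x i 0 = ?response i ?T)"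
      using best_response_iff_total assms unfolding is_GNE_single_cpr_iff_best_responses by blast
  next
    assume fixpoint: "0 < ?T \<and> (\<forall>i<n. x i 0 = ?response i ?T)"
    then have "\<And>l. l < n \<Longrightarrow> 0 \<le> x l 0"
      using fragile_player.response_nonneg[OF players] by metis
    then show "is_GNE n 1 R p a k x"
      using best_response_iff_total fixpoint unfolding is_GNE_single_cpr_iff_best_responses by blast
  qed
qed

lemma response_sum_fixpoint_exists:
  assumes "0 < n"
  shows "\<exists>T>0. (\<Sum>i<n. fragile_player.response (eff_rate R p a k i 0) (F' i) (a i) T) = T"
proof (rule antimono_sum_fixpoint_exists)
  let ?root = "fragile_player.root (eff_rate R p a k 0 0)"
  show "0 \<in> {..<n}" "0 < ?root / 2"
    "0 < fragile_player.response (eff_rate R p a k 0 0) (F' 0) (a 0) (?root / 2)"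
    using assms fragile_player.root_pos[OF players] fragile_player.response_pos[OF players] by auto
  show "\<exists>b>0. fragile_player.response (eff_rate R p a k i 0) (F' i) (a i) b = 0" if "i \<in> {..<n}" for i
    using that fragile_player.root_pos[OF players] fragile_player.response_eq_0[OF players] by auto
qed (use fragile_player.response_nonneg[OF players] fragile_player.antimono_response[OF players]
    fragile_player.continuous_on_response[OF players] in auto)

lemma response_sum_fixpoint_unique:
  assumes "0 < S" "(\<Sum>i<n. fragile_player.response (eff_rate R p a k i 0) (F' i) (a i) S) = S"
    and "0 < T" "(\<Sum>i<n. fragile_player.response (eff_rate R p a k i 0) (F' i) (a i) T) = T"
  shows "S = T"
proof (rule antimono_sum_fixpoint_unique[of "{..<n}" "{0<..}"])
  show "antimono_on {0<..} (fragile_player.response (eff_rate R p a k i 0) (F' i) (a i))"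
    if "i \<in> {..<n}" for i
    using that fragile_player.antimono_response[OF players] by simp
qed (use assms in auto)

end

theorem theorem3:
  fixes n :: nat and R p :: "nat \<Rightarrow> real \<Rightarrow> real" and a k :: "nat \<Rightarrow> real"
  assumes "n \<ge> 1"
    and "fragile_assumption n 1 R p a k"
  shows "\<exists>x. is_GNE n 1 R p a k x \<and>
           (\<forall>y. is_GNE n 1 R p a k y \<longrightarrow> (\<forall>i<n. \<forall>j<1. y i j = x i j))"
proof -
  obtain F' F'' where players: "\<And>i. i < n \<Longrightarrow> fragile_player (eff_rate R p a k i 0) (F' i) (F'' i) (a i)"
    using fragile_assumption_imp_fragile_player[OF assms(2) _ zero_less_one] by metis
  define \<Phi> where "\<Phi> i = fragile_player.response (eff_rate R p a k i 0) (F' i) (a i)" for i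
  have GNE_iff: "is_GNE n 1 R p a k x \<longleftrightarrow> 0 < (\<Sum>l<n. x l 0) \<and> (\<forall>i<n. x i 0 = \<Phi> i (\<Sum>l<n. x l 0))"
    for x
    unfolding \<Phi>_def using is_GNE_single_cpr_iff_fixpoint[OF players] assms(1) by simp
  obtain T where T: "0 < T" "(\<Sum>i<n. \<Phi> i T) = T"
    using response_sum_fixpoint_exists[OF players] assms(1) unfolding \<Phi>_def by auto
  define x where "x i j = \<Phi> i T" for i j :: nat
  have "is_GNE n 1 R p a k x" using GNE_iff T by (simp add: x_def)
  moreover have "y i j = x i j" if "is_GNE n 1 R p a k y" "i < n" "j < 1" for y i j
  proof -
    define S where "S = (\<Sum>l<n. y l 0)"
    have "0 < S" and y: "\<And>i. i < n \<Longrightarrow> y i 0 = \<Phi> i S"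
      using GNE_iff that(1) unfolding S_def by auto
    have "(\<Sum>i<n. \<Phi> i S) = (\<Sum>i<n. y i 0)"
      by (rule sum.cong) (simp_all add: y)
    also have "\<dots> = S" by (simp add: S_def)
    finally have "S = T"
      using response_sum_fixpoint_unique[OF players \<open>0 < S\<close> _ T(1)] T(2) unfolding \<Phi>_def by simp
    then show ?thesis using that y by (simp add: x_def)
  qed
  ultimately show ?thesis by blast
qed

end
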